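(* Let $\Omega$ be a finite set with $|\Omega|\ge2$ and $0<\varepsilon<1/2$. There is $n_0=n_0(\varepsilon,\Omega)$ such that the following holds for all $n>n_0$. Let $\mu\in\mathcal P(\Omega^n)$ and let $S_1,\dots,S_l\subset\Omega^n$ be pairwise disjoint sets such that (i) $\sum_{i=1}^l\mu(S_i)>1-\varepsilon$, and (ii) $\mu(S_i)>0$ and the conditional distribution $\mu[\cdot|S_i]$ is $(\varepsilon/9)^3$-symmetric for each $1\le i\le l$. Let $z=\sum_{h=1}^l\mu(S_h)$. Then $D_\square\Big(\mu,\ \frac1z\sum_{i=1}^l\mu(S_i)\bigotimes_{j=1}^n\mu_j[\cdot|S_i]\Big)<2\varepsilon$.
   Context: $\mathcal P(\mathcal X)$ denotes the set of probability measures on a finite set $\mathcal X$; $[n]=\{1,\dots,n\}$; $\|p-q\|_{TV}=\frac12\sum_x|p(x)-q(x)|$. For $\mu\in\mathcal P(\Omega^n)$, $\mu_j$ and $\mu_{i,j}$ denote the marginals on coordinate $j$ and coordinates $\{i,j\}$; $\mu_j[\cdot|S]$ is the $j$-th marginal of the conditional measure $\mu[\cdot|S]$. $\mu\in\mathcal P(\Omega^V)$ is $\varepsilon$-symmetric if $\frac1{|V|^2}\sum_{i,j\in V,\,i\ne j}\|\mu_{i,j}-\mu_i\otimes\mu_j\|_{TV}<\varepsilon$. For $\mu,\nu\in\mathcal P(\Omega^n)$ let $\Gamma(\mu,\nu)$ be the set of couplings, i.e. probability measures $\gamma$ on $\Omega^n\times\Omega^n$ whose first and second marginals are $\mu$ and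 $\nu$. The cut metric is $D_\square(\mu,\nu)=\frac1n\min_{\gamma\in\Gamma(\mu,\nu)}\max_{I\subset[n],\,B\subset\Omega^n\times\Omega^n,\,\omega\in\Omega}\Big|\sum_{i\in I}\sum_{(\sigma,\tau)\in B}\gamma(\sigma,\tau)\big(\mathbf 1\{\sigma_i=\omega\}-\mathbf 1\{\tau_i=\omega\}\big)\Big|$. *)

theory Defs
  imports "HOL-Analysis.Analysis"
begin

text \<open>Configurations in Omega^n are lists of length n over a finite type 'a;
 coordinates are indexed 0..n-1. A measure on Omega^n is a real function on lists
 supported on lists of length n.\<close>

definition config :: "nat \<Rightarrow> 'a list set" where
  "config n = {\<sigma>. length \<sigma> = n}"

definition is_prob :: "nat \<Rightarrow> ('a list \<Rightarrow> real) \<Rightarrow> bool" where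
  "is_prob n \<mu> \<longleftrightarrow> (\<forall>\<sigma>. 0 \<le> \<mu> \<sigma>) \<and> (\<forall>\<sigma>. length \<sigma> \<noteq> n \<longrightarrow> \<mu> \<sigma> = 0)
      \<and> (\<Sum>\<sigma>\<in>config n. \<mu> \<sigma>) = 1"

definition msr :: "nat \<Rightarrow> ('a list \<Rightarrow> real) \<Rightarrow> 'a list set \<Rightarrow> real" where
  "msr n \<mu> S = (\<Sum>\<sigma>\<in>S \<inter> config n. \<mu> \<sigma>)"

definition cond :: "nat \<Rightarrow> ('a list \<Rightarrow> real) \<Rightarrow> 'a list set \<Rightarrow> 'a list \<Rightarrow> real" where
  "cond n \<mu> S \<sigma> = (if \<sigma> \<in> S \<inter> config n then \<mu> \<sigma> / msr n \<mu> S else 0)"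

definition marg1 :: "nat \<Rightarrow> ('a list \<Rightarrow> real) \<Rightarrow> nat \<Rightarrow> 'a \<Rightarrow> real" where
  "marg1 n \<mu> j \<omega> = (\<Sum>\<sigma>\<in>config n. if \<sigma> ! j = \<omega> then \<mu> \<sigma> else 0)"

definition marg2 :: "nat \<Rightarrow> ('a list \<Rightarrow> real) \<Rightarrow> nat \<Rightarrow> nat \<Rightarrow> 'a \<times> 'a \<Rightarrow> real" where
  "marg2 n \<mu> i j p = (\<Sum>\<sigma>\<in>config n. if \<sigma> ! i = fst p \<and> \<sigma> ! j = snd p then \<mu> \<sigma> else 0)"

definition tv :: "('b::finite \<Rightarrow> real) \<Rightarrow> ('b \<Rightarrow> real) \<Rightarrow> real" where
  "tv p q = (1/2) * (\<Sum>x\<in>UNIV. \<bar>p x - q x\<bar>)"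

definition eps_symmetric :: "nat \<Rightarrow> ('a::finite list \<Rightarrow> real) \<Rightarrow> real \<Rightarrow> bool" where
  "eps_symmetric n \<mu> \<epsilon> \<longleftrightarrow>
     (1 / (real n)^2) * (\<Sum>i\<in>{..<n}. \<Sum>j\<in>{..<n} - {i}.
        tv (marg2 n \<mu> i j) (\<lambda>p. marg1 n \<mu> i (fst p) * marg1 n \<mu> j (snd p))) < \<epsilon>"

definition prodm :: "nat \<Rightarrow> (nat \<Rightarrow> 'a \<Rightarrow> real) \<Rightarrow> 'a list \<Rightarrow> real" where
  "prodm n ps \<sigma> = (if length \<sigma> = n then (\<Prod>j<n. ps j (\<sigma> ! j)) else 0)"

definition couplings :: "nat \<Rightarrow> ('a list \<Rightarrow> real) \<Rightarrow> ('a list \<Rightarrow> real)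
    \<Rightarrow> ('a list \<times> 'a list \<Rightarrow> real) set" where
  "couplings n \<mu> \<nu> = {\<gamma>. (\<forall>x. 0 \<le> \<gamma> x)
      \<and> (\<forall>x. x \<notin> config n \<times> config n \<longrightarrow> \<gamma> x = 0)
      \<and> (\<forall>\<sigma>\<in>config n. (\<Sum>\<tau>\<in>config n. \<gamma> (\<sigma>, \<tau>)) = \<mu> \<sigma>)
      \<and> (\<forall>\<tau>\<in>config n. (\<Sum>\<sigma>\<in>config n. \<gamma> (\<sigma>, \<tau>)) = \<nu> \<tau>)}"

definition cut_val :: "nat \<Rightarrow> ('a::finite list \<times> 'a list \<Rightarrow> real) \<Rightarrow> real" where
  "cut_val n \<gamma> = Max {\<bar>\<Sum>i\<in>I. \<Sum>x\<in>B. \<gamma> x *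
        ((if fst x ! i = \<omega> then 1 else 0) - (if snd x ! i = \<omega> then 1 else 0))\<bar> |
      I B \<omega>. I \<subseteq> {..<n} \<and> B \<subseteq> config n \<times> config n}"

text \<open>Cut metric; the minimum over couplings is attained (compact polytope,
 continuous objective), so it equals the infimum.\<close>
definition cut_dist :: "nat \<Rightarrow> ('a::finite list \<Rightarrow> real) \<Rightarrow> ('a list \<Rightarrow> real) \<Rightarrow> real" where
  "cut_dist n \<mu> \<nu> = (1 / real n) * (INF \<gamma>\<in>couplings n \<mu> \<nu>. cut_val n \<gamma>)"

end

theory Submission
  imports Defs
begin

text \<open>Couple \<mu> with the mixture \<nu> by pairing \<mu> restricted to \<open>S i\<close> with the product \<open>\<pi>\<^sub>i\<close>
  of the marginals of \<open>\<mu>[\<cdot>|S i]\<close>, and the remaining mass \<open>1 - z < \<epsilon>\<close> with \<nu> itself.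
  Under this coupling a cut \<open>(I, B, \<omega>)\<close> is at most the expected \<open>|N(\<sigma>) - N(\<tau>)|\<close> for the
  count \<open>N(\<sigma>) = #{j \<in> I. \<sigma>\<^sub>j = \<omega>}\<close>. Inside a cluster \<sigma> and \<tau> have the same coordinate
  means, so this is at most the sum of the mean absolute deviations of \<open>N\<close> under \<open>\<mu>[\<cdot>|S i]\<close> and
  \<open>\<pi>\<^sub>i\<close>. The squared deviation is at most \<open>n\<close> plus the sum of the pairwise covariances, which
  is \<open>O(\<delta> n\<^sup>2)\<close> by \<delta>-symmetry and zero for the product. With \<open>\<delta> = (\<epsilon>/9)\<^sup>3\<close> and
  \<open>n > 8/\<epsilon>\<^sup>2\<close> each cluster contributes at most \<open>\<epsilon> n\<close>, the remaining mass at most \<open>(1 - z) n\<close>.\<close>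

lemma finite_config: "finite (config n :: 'a::finite list set)"
  unfolding config_def using finite_lists_length_eq[of "UNIV :: 'a set" n] by simp

lemma config_Suc: "config (Suc n) = (\<lambda>(xs, x). xs @ [x]) ` (config n \<times> UNIV)"
proof
  show "config (Suc n) \<subseteq> (\<lambda>(xs, x). xs @ [x]) ` (config n \<times> UNIV)"
  proof
    fix ys assume "ys \<in> config (Suc n)"
    hence l: "length ys = Suc n" by (simp add: config_def)
    hence "ys = butlast ys @ [last ys]" by (metis append_butlast_last_id list.size(3) nat.distinct(1))
    moreover have "butlast ys \<in> config n" using l by (simp add: config_def)
    ultimately show "ys \<in> (\<lambda>(xs, x). xs @ [x]) ` (config n \<times> UNIV)" by force
  qed
qed (auto simp: config_def)

lemma sum_config_prod:
  fixes h :: "nat \<Rightarrow> 'a::finite \<Rightarrow> real"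
  shows "(\<Sum>\<sigma>\<in>config n. \<Prod>j<n. h j (\<sigma> ! j)) = (\<Prod>j<n. \<Sum>a\<in>UNIV. h j a)"
proof (induction n)
  case 0
  have "config 0 = {[] :: 'a list}" by (auto simp: config_def)
  thus ?case by simp
next
  case (Suc n)
  have inj: "inj_on (\<lambda>(xs :: 'a list, x :: 'a). xs @ [x]) (config n \<times> UNIV)"
    by (auto simp: inj_on_def)
  have "(\<Sum>\<sigma>\<in>config (Suc n). \<Prod>j<Suc n. h j (\<sigma> ! j))
      = (\<Sum>(xs, x)\<in>config n \<times> UNIV. \<Prod>j<Suc n. h j ((xs @ [x]) ! j))"
    unfolding config_Suc by (subst sum.reindex[OF inj]) (simp add: case_prod_beta)
  also have "\<dots> = (\<Sum>(xs, x)\<in>config n \<times> UNIV. (\<Prod>j<n. h j (xs ! j)) * h n x)"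
    by (intro sum.cong refl) (auto simp: config_def nth_append)
  also have "\<dots> = (\<Sum>xs\<in>config n. \<Prod>j<n. h j (xs ! j)) * (\<Sum>x\<in>UNIV. h n x)"
    by (simp add: sum.cartesian_product[symmetric] sum_product)
  also have "\<dots> = (\<Prod>j<Suc n. \<Sum>a\<in>UNIV. h j a)" using Suc by simp
  finally show ?case .
qed

lemma sum_prodm_mult_prod:
  fixes ps f :: "nat \<Rightarrow> 'a::finite \<Rightarrow> real"
  shows "(\<Sum>\<sigma>\<in>config n. prodm n ps \<sigma> * (\<Prod>i<n. f i (\<sigma> ! i))) = (\<Prod>i<n. \<Sum>a\<in>UNIV. ps i a * f i a)"
proof -
  have "(\<Sum>\<sigma>\<in>config n. prodm n ps \<sigma> * (\<Prod>i<n. f i (\<sigma> ! i)))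
      = (\<Sum>\<sigma>\<in>config n. \<Prod>i<n. ps i (\<sigma> ! i) * f i (\<sigma> ! i))"
    by (rule sum.cong) (auto simp: prodm_def config_def prod.distrib)
  also have "\<dots> = (\<Prod>i<n. \<Sum>a\<in>UNIV. ps i a * f i a)" by (rule sum_config_prod)
  finally show ?thesis .
qed

lemma is_prob_prodm:
  fixes ps :: "nat \<Rightarrow> 'a::finite \<Rightarrow> real"
  assumes "\<And>j a. 0 \<le> ps j a" and "\<And>j. j < n \<Longrightarrow> (\<Sum>a\<in>UNIV. ps j a) = 1"
  shows "is_prob n (prodm n ps)"
  using sum_prodm_mult_prod[of n ps "\<lambda>_ _. 1"] assms
  by (auto simp: is_prob_def prodm_def intro: prod_nonneg)

lemma marg2_prodm:
  fixes ps :: "nat \<Rightarrow> 'a::finite \<Rightarrow> real"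
  assumes sum1: "\<And>j. j < n \<Longrightarrow> (\<Sum>a\<in>UNIV. ps j a) = 1" and "j < n" "k < n" "j \<noteq> k"
  shows "marg2 n (prodm n ps) j k p = ps j (fst p) * ps k (snd p)"
proof -
  define f where "f i a = (if i = j then of_bool (a = fst p) else 1)
    * (if i = k then of_bool (a = snd p) else (1::real))" for i a
  have "marg2 n (prodm n ps) j k p = (\<Sum>\<sigma>\<in>config n. prodm n ps \<sigma> * (\<Prod>i<n. f i (\<sigma> ! i)))"
    unfolding marg2_def f_def using assms(2,3) by (intro sum.cong) (auto simp: prod.distrib prod.delta)
  also have "\<dots> = (\<Prod>i<n. (if i = j then ps j (fst p) else 1) * (if i = k then ps k (snd p) else 1))"
    unfolding sum_prodm_mult_prod using sum1 assms(4)
    by (intro prod.cong) (auto simp: f_def if_distrib cong: if_cong)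
  also have "\<dots> = ps j (fst p) * ps k (snd p)" using assms(2,3) by (simp add: prod.distrib prod.delta)
  finally show ?thesis .
qed

lemma marg1_prodm:
  fixes ps :: "nat \<Rightarrow> 'a::finite \<Rightarrow> real"
  assumes sum1: "\<And>j. j < n \<Longrightarrow> (\<Sum>a\<in>UNIV. ps j a) = 1" and "j < n"
  shows "marg1 n (prodm n ps) j \<omega> = ps j \<omega>"
proof -
  define f where "f i a = (if i = j then of_bool (a = \<omega>) else (1::real))" for i a
  have "marg1 n (prodm n ps) j \<omega> = (\<Sum>\<sigma>\<in>config n. prodm n ps \<sigma> * (\<Prod>i<n. f i (\<sigma> ! i)))"
    unfolding marg1_def f_def using assms(2) by (intro sum.cong) (auto simp: prod.delta)
  also have "\<dots> = (\<Prod>i<n. if i = j then ps j \<omega> else 1)"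
    unfolding sum_prodm_mult_prod using sum1
    by (intro prod.cong) (auto simp: f_def if_distrib cong: if_cong)
  also have "\<dots> = ps j \<omega>" using assms(2) by (simp add: prod.delta)
  finally show ?thesis .
qed

lemma marg1_nonneg: "is_prob n \<rho> \<Longrightarrow> 0 \<le> marg1 n \<rho> j a"
  unfolding marg1_def is_prob_def by (intro sum_nonneg) auto

lemma sum_marg1:
  assumes "is_prob n (\<rho> :: 'a::finite list \<Rightarrow> real)"
  shows "(\<Sum>a\<in>UNIV. marg1 n \<rho> j a) = 1"
proof -
  have "(\<Sum>a\<in>UNIV. marg1 n \<rho> j a) = (\<Sum>\<sigma>\<in>config n. \<Sum>a\<in>UNIV. if \<sigma> ! j = a then \<rho> \<sigma> else 0)"
    unfolding marg1_def by (rule sum.swap)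
  also have "\<dots> = 1" using assms by (simp add: is_prob_def)
  finally show ?thesis .
qed

lemma is_prob_prodm_marg1:
  "is_prob n (\<rho> :: 'a::finite list \<Rightarrow> real) \<Longrightarrow> is_prob n (prodm n (marg1 n \<rho>))"
  by (intro is_prob_prodm marg1_nonneg sum_marg1)

lemma marg1_prodm_marg1:
  "is_prob n (\<rho> :: 'a::finite list \<Rightarrow> real) \<Longrightarrow> j < n \<Longrightarrow> marg1 n (prodm n (marg1 n \<rho>)) j = marg1 n \<rho> j"
  using marg1_prodm[of n "marg1 n \<rho>" j] sum_marg1[of n \<rho>] by auto

lemma is_prob_cond:
  fixes \<mu> :: "'a::finite list \<Rightarrow> real"
  assumes \<mu>: "is_prob n \<mu>" and pos: "0 < msr n \<mu> S"
  shows "is_prob n (cond n \<mu> S)"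
proof -
  have "(\<Sum>\<sigma>\<in>config n. cond n \<mu> S \<sigma>) = (\<Sum>\<sigma>\<in>S \<inter> config n. \<mu> \<sigma> / msr n \<mu> S)"
    unfolding cond_def by (simp add: Int_commute[of S "config n"] sum.inter_restrict[OF finite_config])
  also have "\<dots> = 1" using pos by (simp add: sum_divide_distrib[symmetric] msr_def)
  finally show ?thesis using \<mu> pos by (auto simp: is_prob_def cond_def config_def)
qed

definition centered_count :: "nat \<Rightarrow> ('a list \<Rightarrow> real) \<Rightarrow> nat set \<Rightarrow> 'a \<Rightarrow> 'a list \<Rightarrow> real" where
  "centered_count n \<rho> I \<omega> \<sigma> = (\<Sum>j\<in>I. (if \<sigma> ! j = \<omega> then 1 else 0) - marg1 n \<rho> j \<omega>)"

definition pair_correlation :: "nat \<Rightarrow> ('a list \<Rightarrow> real) \<Rightarrow> 'a \<Rightarrow> real" where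
  "pair_correlation n \<rho> \<omega> =
     (\<Sum>j<n. \<Sum>k\<in>{..<n} - {j}. \<bar>marg2 n \<rho> j k (\<omega>, \<omega>) - marg1 n \<rho> j \<omega> * marg1 n \<rho> k \<omega>\<bar>)"

lemma count_diff_eq_centered_count_diff:
  "(\<Sum>j\<in>I. (if \<sigma> ! j = \<omega> then 1 else 0) - (if \<tau> ! j = \<omega> then 1 else 0))
     = centered_count n \<rho> I \<omega> \<sigma> - centered_count n \<rho> I \<omega> \<tau>"
  unfolding centered_count_def by (simp add: sum_subtractf)

lemma centered_count_prodm_marg1:
  fixes \<rho> :: "'a::finite list \<Rightarrow> real"
  assumes "is_prob n \<rho>" and "I \<subseteq> {..<n}"
  shows "centered_count n (prodm n (marg1 n \<rho>)) I \<omega> = centered_count n \<rho> I \<omega>"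
  unfolding centered_count_def using assms by (intro ext sum.cong refl) (auto simp: marg1_prodm_marg1)

lemma covariance_indicators:
  fixes \<rho> :: "'a::finite list \<Rightarrow> real"
  assumes "is_prob n \<rho>"
  shows "(\<Sum>\<sigma>\<in>config n. \<rho> \<sigma> * (((if \<sigma> ! j = \<omega> then 1 else 0) - marg1 n \<rho> j \<omega>)
           * ((if \<sigma> ! k = \<omega> then 1 else 0) - marg1 n \<rho> k \<omega>)))
           = marg2 n \<rho> j k (\<omega>, \<omega>) - marg1 n \<rho> j \<omega> * marg1 n \<rho> k \<omega>"
proof -
  define q where "q j = marg1 n \<rho> j \<omega>" for j
  define ind where "ind j \<sigma> = (if \<sigma> ! j = \<omega> then 1 else (0::real))" for j and \<sigma> :: "'a list"
  have mean: "(\<Sum>\<sigma>\<in>config n. \<rho> \<sigma> * ind j \<sigma>) = q j" for j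
    unfolding q_def marg1_def ind_def by (rule sum.cong) auto
  have joint: "(\<Sum>\<sigma>\<in>config n. \<rho> \<sigma> * (ind j \<sigma> * ind k \<sigma>)) = marg2 n \<rho> j k (\<omega>, \<omega>)"
    unfolding marg2_def ind_def by (rule sum.cong) auto
  have "(\<Sum>\<sigma>\<in>config n. \<rho> \<sigma> * ((ind j \<sigma> - q j) * (ind k \<sigma> - q k)))
      = (\<Sum>\<sigma>\<in>config n. \<rho> \<sigma> * (ind j \<sigma> * ind k \<sigma>) - q k * (\<rho> \<sigma> * ind j \<sigma>) - q j * (\<rho> \<sigma> * ind k \<sigma>) + q j * q k * \<rho> \<sigma>)"
    by (rule sum.cong) (auto simp: algebra_simps)
  also have "\<dots> = marg2 n \<rho> j k (\<omega>, \<omega>) - q j * q k"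
    using assms(1) by (simp add: sum.distrib sum_subtractf sum_distrib_left[symmetric] mean joint is_prob_def)
  finally show ?thesis unfolding q_def ind_def .
qed

lemma second_moment_centered_count_le:
  fixes \<rho> :: "'a::finite list \<Rightarrow> real"
  assumes \<rho>: "is_prob n \<rho>" and I: "I \<subseteq> {..<n}"
  shows "(\<Sum>\<sigma>\<in>config n. \<rho> \<sigma> * (centered_count n \<rho> I \<omega> \<sigma>)\<^sup>2) \<le> real n + pair_correlation n \<rho> \<omega>"
proof -
  define X where "X j \<sigma> = (if \<sigma> ! j = \<omega> then 1 else 0) - marg1 n \<rho> j \<omega>" for j and \<sigma> :: "'a list"
  define D where "D j k = \<bar>marg2 n \<rho> j k (\<omega>, \<omega>) - marg1 n \<rho> j \<omega> * marg1 n \<rho> k \<omega>\<bar>" for j k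
  have cov: "(\<Sum>\<sigma>\<in>config n. \<rho> \<sigma> * (X j \<sigma> * X k \<sigma>)) = marg2 n \<rho> j k (\<omega>, \<omega>) - marg1 n \<rho> j \<omega> * marg1 n \<rho> k \<omega>"
    for j k unfolding X_def by (rule covariance_indicators[OF \<rho>])
  have variance: "(\<Sum>\<sigma>\<in>config n. \<rho> \<sigma> * (X j \<sigma> * X j \<sigma>)) \<le> 1" for j
  proof -
    have "marg2 n \<rho> j j (\<omega>, \<omega>) = marg1 n \<rho> j \<omega>" unfolding marg2_def marg1_def by simp
    moreover have "q - q * q \<le> 1" for q :: real using zero_le_square[of "q - 1/2"] by (simp add: algebra_simps)
    ultimately show ?thesis using cov[of j j] by simp
  qed
  have fin: "finite I" using I finite_subset by blast
  have "(\<Sum>\<sigma>\<in>config n. \<rho> \<sigma> * (centered_count n \<rho> I \<omega> \<sigma>)\<^sup>2)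
      = (\<Sum>\<sigma>\<in>config n. \<Sum>j\<in>I. \<Sum>k\<in>I. \<rho> \<sigma> * (X j \<sigma> * X k \<sigma>))"
    unfolding centered_count_def X_def[symmetric] power2_eq_square sum_product
    by (simp add: sum_distrib_left)
  also have "\<dots> = (\<Sum>j\<in>I. \<Sum>k\<in>I. \<Sum>\<sigma>\<in>config n. \<rho> \<sigma> * (X j \<sigma> * X k \<sigma>))"
    by (subst sum.swap) (intro sum.cong refl, rule sum.swap)
  also have "\<dots> = (\<Sum>j\<in>I. (\<Sum>\<sigma>\<in>config n. \<rho> \<sigma> * (X j \<sigma> * X j \<sigma>))
      + (\<Sum>k\<in>I - {j}. \<Sum>\<sigma>\<in>config n. \<rho> \<sigma> * (X j \<sigma> * X k \<sigma>)))"
    using fin by (intro sum.cong refl) (simp add: sum.remove)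
  also have "\<dots> \<le> (\<Sum>j\<in>I. 1 + (\<Sum>k\<in>{..<n} - {j}. D j k))"
  proof (intro sum_mono add_mono variance)
    fix j assume "j \<in> I"
    have "(\<Sum>k\<in>I - {j}. \<Sum>\<sigma>\<in>config n. \<rho> \<sigma> * (X j \<sigma> * X k \<sigma>)) \<le> (\<Sum>k\<in>I - {j}. D j k)"
      unfolding cov D_def by (intro sum_mono) simp
    also have "\<dots> \<le> (\<Sum>k\<in>{..<n} - {j}. D j k)"
      using I by (intro sum_mono2) (auto simp: D_def)
    finally show "(\<Sum>k\<in>I - {j}. \<Sum>\<sigma>\<in>config n. \<rho> \<sigma> * (X j \<sigma> * X k \<sigma>)) \<le> (\<Sum>k\<in>{..<n} - {j}. D j k)" .
  qed
  also have "\<dots> = real (card I) + (\<Sum>j\<in>I. \<Sum>k\<in>{..<n} - {j}. D j k)"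
    by (simp add: sum.distrib)
  also have "\<dots> \<le> real n + pair_correlation n \<rho> \<omega>"
  proof (rule add_mono)
    show "real (card I) \<le> real n" using card_mono[OF _ I] by simp
    show "(\<Sum>j\<in>I. \<Sum>k\<in>{..<n} - {j}. D j k) \<le> pair_correlation n \<rho> \<omega>"
      unfolding pair_correlation_def D_def[symmetric] using I
      by (intro sum_mono2) (auto simp: D_def intro: sum_nonneg)
  qed
  finally show ?thesis .
qed

lemma abs_le_square_div: "0 < c \<Longrightarrow> \<bar>a::real\<bar> \<le> a\<^sup>2 / (2 * c) + c / 2"
proof -
  assume c: "0 < c"
  have "2 * c * \<bar>a\<bar> \<le> a\<^sup>2 + c\<^sup>2"
    using zero_le_power2[of "\<bar>a\<bar> - c"] by (simp add: power2_eq_square algebra_simps)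
  thus ?thesis using c by (simp add: field_simps power2_eq_square)
qed

lemma first_moment_centered_count_le:
  fixes \<rho> :: "'a::finite list \<Rightarrow> real"
  assumes \<rho>: "is_prob n \<rho>" and I: "I \<subseteq> {..<n}" and c: "0 < c"
  shows "(\<Sum>\<sigma>\<in>config n. \<rho> \<sigma> * \<bar>centered_count n \<rho> I \<omega> \<sigma>\<bar>)
           \<le> (real n + pair_correlation n \<rho> \<omega>) / (2 * c) + c / 2"
proof -
  let ?A = "centered_count n \<rho> I \<omega>"
  have "(\<Sum>\<sigma>\<in>config n. \<rho> \<sigma> * \<bar>?A \<sigma>\<bar>) \<le> (\<Sum>\<sigma>\<in>config n. \<rho> \<sigma> * ((?A \<sigma>)\<^sup>2 / (2 * c) + c / 2))"
    using \<rho> c by (intro sum_mono mult_left_mono abs_le_square_div) (auto simp: is_prob_def)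
  also have "\<dots> = (\<Sum>\<sigma>\<in>config n. \<rho> \<sigma> * (?A \<sigma>)\<^sup>2) / (2 * c) + c / 2"
    using \<rho> by (simp add: is_prob_def algebra_simps sum.distrib sum_divide_distrib[symmetric]
        sum_distrib_right[symmetric] sum_distrib_left[symmetric])
  also have "\<dots> \<le> (real n + pair_correlation n \<rho> \<omega>) / (2 * c) + c / 2"
    using second_moment_centered_count_le[OF \<rho> I] c by (simp add: divide_right_mono)
  finally show ?thesis .
qed

lemma entry_le_tv: "\<bar>p x - r x\<bar> \<le> 2 * tv p (r :: 'b::finite \<Rightarrow> real)"
  unfolding tv_def by (simp add: member_le_sum[where f = "\<lambda>x. \<bar>p x - r x\<bar>"])

lemma pair_correlation_le_eps_symmetric:
  assumes "eps_symmetric n (\<rho> :: 'a::finite list \<Rightarrow> real) \<delta>"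
  shows "pair_correlation n \<rho> \<omega> \<le> 2 * (real n)\<^sup>2 * \<delta>"
proof (cases "n = 0")
  case True
  thus ?thesis by (simp add: pair_correlation_def)
next
  case False
  let ?T = "\<Sum>j<n. \<Sum>k\<in>{..<n} - {j}. tv (marg2 n \<rho> j k) (\<lambda>p. marg1 n \<rho> j (fst p) * marg1 n \<rho> k (snd p))"
  have "pair_correlation n \<rho> \<omega> \<le> 2 * ?T"
    unfolding pair_correlation_def sum_distrib_left
    by (intro sum_mono, rule order_trans[OF _ entry_le_tv[where x = "(\<omega>, \<omega>)"]]) simp
  moreover have "?T < (real n)\<^sup>2 * \<delta>"
    using assms False unfolding eps_symmetric_def by (simp add: field_simps)
  ultimately show ?thesis by linarith
qed

lemma pair_correlation_prodm:
  fixes ps :: "nat \<Rightarrow> 'a::finite \<Rightarrow> real"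
  assumes "\<And>j. j < n \<Longrightarrow> (\<Sum>a\<in>UNIV. ps j a) = 1"
  shows "pair_correlation n (prodm n ps) \<omega> = 0"
  unfolding pair_correlation_def using assms by (intro sum.neutral ballI) (auto simp: marg1_prodm marg2_prodm)

lemma sum_sum_mult_abs_diff_le:
  fixes p q f :: "'b \<Rightarrow> real"
  assumes "\<And>x. x \<in> C \<Longrightarrow> 0 \<le> p x" "\<And>y. y \<in> C \<Longrightarrow> 0 \<le> q y" "sum p C = 1" "sum q C = 1"
  shows "(\<Sum>x\<in>C. \<Sum>y\<in>C. p x * q y * \<bar>f x - f y\<bar>) \<le> (\<Sum>x\<in>C. p x * \<bar>f x\<bar>) + (\<Sum>y\<in>C. q y * \<bar>f y\<bar>)"
proof -
  have "(\<Sum>x\<in>C. \<Sum>y\<in>C. p x * q y * \<bar>f x - f y\<bar>) \<le> (\<Sum>x\<in>C. \<Sum>y\<in>C. p x * \<bar>f x\<bar> * q y + p x * (q y * \<bar>f y\<bar>))"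
  proof (intro sum_mono)
    fix x y assume "x \<in> C" "y \<in> C"
    hence "0 \<le> p x * q y" using assms(1,2) by simp
    hence "p x * q y * \<bar>f x - f y\<bar> \<le> p x * q y * (\<bar>f x\<bar> + \<bar>f y\<bar>)" by (intro mult_left_mono) auto
    thus "p x * q y * \<bar>f x - f y\<bar> \<le> p x * \<bar>f x\<bar> * q y + p x * (q y * \<bar>f y\<bar>)" by (simp add: algebra_simps)
  qed
  also have "\<dots> = (\<Sum>x\<in>C. p x * \<bar>f x\<bar>) * sum q C + sum p C * (\<Sum>y\<in>C. q y * \<bar>f y\<bar>)"
    by (simp add: sum.distrib sum_product)
  finally show ?thesis using assms(3,4) by simp
qed

lemma sum_sum_mult_abs_le:
  fixes p q :: "'b \<Rightarrow> real"
  assumes "\<And>x. x \<in> C \<Longrightarrow> 0 \<le> p x" "\<And>y. y \<in> C \<Longrightarrow> 0 \<le> q y" "\<And>x y. \<bar>g x y\<bar> \<le> b"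
  shows "(\<Sum>x\<in>C. \<Sum>y\<in>C. p x * q y * \<bar>g x y\<bar>) \<le> sum p C * sum q C * b"
proof -
  have "(\<Sum>x\<in>C. \<Sum>y\<in>C. p x * q y * \<bar>g x y\<bar>) \<le> (\<Sum>x\<in>C. \<Sum>y\<in>C. p x * q y * b)"
    using assms by (intro sum_mono mult_left_mono) auto
  also have "\<dots> = sum p C * sum q C * b"
    by (simp add: sum_distrib_left sum_distrib_right mult.assoc) (rule sum.swap)
  finally show ?thesis .
qed

lemma finite_cut_terms:
  "finite {(f I B \<omega> :: real) | I B (\<omega> :: 'a::finite). I \<subseteq> {..<n} \<and> B \<subseteq> (config n \<times> config n :: ('a list \<times> 'a list) set)}"
proof -
  have "{f I B \<omega> | I B (\<omega> :: 'a). I \<subseteq> {..<n} \<and> B \<subseteq> config n \<times> config n}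
     \<subseteq> (\<lambda>(I, B, \<omega>). f I B \<omega>) ` (Pow {..<n} \<times> Pow (config n \<times> config n) \<times> UNIV)"
    by (auto intro!: image_eqI)
  moreover have "finite (Pow {..<n} \<times> Pow (config n \<times> config n :: ('a list \<times> 'a list) set) \<times> (UNIV :: 'a set))"
    by (simp add: finite_config)
  ultimately show ?thesis using finite_subset by blast
qed

lemma cut_val_nonneg: "0 \<le> cut_val n (\<gamma> :: 'a::finite list \<times> 'a list \<Rightarrow> real)"
  unfolding cut_val_def
  by (rule Max_ge[OF finite_cut_terms], rule CollectI, intro exI[of _ "{}"] exI[of _ undefined]) simp

lemma cut_val_less:
  fixes \<gamma> :: "'a::finite list \<times> 'a list \<Rightarrow> real"
  assumes "\<And>I B \<omega>. I \<subseteq> {..<n} \<Longrightarrow> B \<subseteq> config n \<times> config n \<Longrightarrow>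
     \<bar>\<Sum>i\<in>I. \<Sum>x\<in>B. \<gamma> x * ((if fst x ! i = \<omega> then 1 else 0) - (if snd x ! i = \<omega> then 1 else 0))\<bar> < t"
  shows "cut_val n \<gamma> < t"
  unfolding cut_val_def using assms by (subst Max_less_iff[OF finite_cut_terms]) blast+

lemma cut_dist_le_cut_val:
  assumes "\<gamma> \<in> couplings n \<mu> \<nu>"
  shows "cut_dist n \<mu> \<nu> \<le> cut_val n \<gamma> / real n"
proof -
  have "(INF \<gamma>\<in>couplings n \<mu> \<nu>. cut_val n \<gamma>) \<le> cut_val n \<gamma>"
    using assms by (intro cINF_lower bdd_belowI2[where m = 0] cut_val_nonneg)
  thus ?thesis unfolding cut_dist_def by (simp add: divide_right_mono)
qed

lemma cut_term_le_transport_cost: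
  fixes \<gamma> :: "'a::finite list \<times> 'a list \<Rightarrow> real"
  assumes \<gamma>: "\<And>x. 0 \<le> \<gamma> x" and B: "B \<subseteq> config n \<times> config n"
  shows "\<bar>\<Sum>i\<in>I. \<Sum>x\<in>B. \<gamma> x * ((if fst x ! i = \<omega> then 1 else 0) - (if snd x ! i = \<omega> then 1 else 0))\<bar>
    \<le> (\<Sum>\<sigma>\<in>config n. \<Sum>\<tau>\<in>config n.
          \<gamma> (\<sigma>, \<tau>) * \<bar>\<Sum>i\<in>I. (if \<sigma> ! i = \<omega> then 1 else 0) - (if \<tau> ! i = \<omega> then 1 else 0)\<bar>)"
proof -
  define F where "F x = (\<Sum>i\<in>I. (if fst x ! i = \<omega> then 1 else 0) - (if snd x ! i = \<omega> then 1 else (0::real)))"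
    for x :: "'a list \<times> 'a list"
  have "\<bar>\<Sum>i\<in>I. \<Sum>x\<in>B. \<gamma> x * ((if fst x ! i = \<omega> then 1 else 0) - (if snd x ! i = \<omega> then 1 else 0))\<bar>
      = \<bar>\<Sum>x\<in>B. \<gamma> x * F x\<bar>"
    unfolding F_def by (subst sum.swap) (simp add: sum_distrib_left)
  also have "\<dots> \<le> (\<Sum>x\<in>B. \<gamma> x * \<bar>F x\<bar>)"
    using sum_abs[of "\<lambda>x. \<gamma> x * F x" B] \<gamma> by (simp add: abs_mult)
  also have "\<dots> \<le> (\<Sum>x\<in>config n \<times> config n. \<gamma> x * \<bar>F x\<bar>)"
    using B \<gamma> by (intro sum_mono2) (auto simp: finite_config)
  also have "\<dots> = (\<Sum>\<sigma>\<in>config n. \<Sum>\<tau>\<in>config n. \<gamma> (\<sigma>, \<tau>) * \<bar>F (\<sigma>, \<tau>)\<bar>)"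
    by (simp add: sum.cartesian_product)
  finally show ?thesis unfolding F_def by simp
qed

lemma cluster_error_arith:
  fixes e N :: real
  assumes e: "0 < e" "e < 1/2" and N: "8 < N * e\<^sup>2"
  defines "c \<equiv> e * N / 2"
  shows "((N + 2 * N\<^sup>2 * (e/9)^3) / (2 * c) + c / 2) + ((N + 0) / (2 * c) + c / 2) \<le> e * N"
proof -
  have "0 < N" using N e by (metis mult_nonpos_nonneg not_less order_less_trans zero_le_power2 zero_less_numeral)
  hence lhs: "((N + 2 * N\<^sup>2 * (e/9)^3) / (2 * c) + c / 2) + ((N + 0) / (2 * c) + c / 2)
      = 2 / e + 2 * N * e\<^sup>2 / 729 + e * N / 2"
    using e unfolding c_def by (simp add: field_simps power2_eq_square power3_eq_cube)
  have "2 / e < e * N / 4" using N e by (simp add: field_simps power2_eq_square)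
  moreover have "2 * N * e\<^sup>2 / 729 \<le> e * N / 4"
    using \<open>0 < N\<close> e by (simp add: power2_eq_square field_simps)
  ultimately show ?thesis unfolding lhs by linarith
qed

locale cluster_decomposition =
  fixes n :: nat and \<mu> :: "'a::finite list \<Rightarrow> real" and l :: nat and S :: "nat \<Rightarrow> 'a list set"
  assumes prob: "is_prob n \<mu>"
    and cluster_config: "\<And>i. i \<in> {1..l} \<Longrightarrow> S i \<subseteq> config n"
    and cluster_disjoint: "\<And>i h. i \<in> {1..l} \<Longrightarrow> h \<in> {1..l} \<Longrightarrow> i \<noteq> h \<Longrightarrow> S i \<inter> S h = {}"
    and cluster_mass_pos: "\<And>i. i \<in> {1..l} \<Longrightarrow> 0 < msr n \<mu> (S i)"
begin

abbreviation mass :: "nat \<Rightarrow> real" where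
  "mass i \<equiv> msr n \<mu> (S i)"

abbreviation total_mass :: real where
  "total_mass \<equiv> \<Sum>i=1..l. mass i"

abbreviation cluster_measure :: "nat \<Rightarrow> 'a list \<Rightarrow> real" where
  "cluster_measure i \<equiv> cond n \<mu> (S i)"

abbreviation cluster_product :: "nat \<Rightarrow> 'a list \<Rightarrow> real" where
  "cluster_product i \<equiv> prodm n (marg1 n (cluster_measure i))"

definition mixture :: "'a list \<Rightarrow> real" where
  "mixture \<sigma> = (1 / total_mass) * (\<Sum>i=1..l. mass i * cluster_product i \<sigma>)"

definition unclustered :: "'a list \<Rightarrow> real" where
  "unclustered \<sigma> = \<mu> \<sigma> - (\<Sum>i=1..l. mass i * cluster_measure i \<sigma>)"

definition gluing :: "'a list \<times> 'a list \<Rightarrow> real" where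
  "gluing x = (if x \<in> config n \<times> config n
     then (\<Sum>i=1..l. mass i * cluster_measure i (fst x) * cluster_product i (snd x))
          + unclustered (fst x) * mixture (snd x)
     else 0)"

lemma mass_nonneg: "i \<in> {1..l} \<Longrightarrow> 0 \<le> mass i"
  using cluster_mass_pos less_imp_le by blast

lemma is_prob_cluster_measure: "i \<in> {1..l} \<Longrightarrow> is_prob n (cluster_measure i)"
  by (intro is_prob_cond prob cluster_mass_pos)

lemma is_prob_cluster_product: "i \<in> {1..l} \<Longrightarrow> is_prob n (cluster_product i)"
  by (intro is_prob_prodm_marg1 is_prob_cluster_measure)

lemma mass_mult_cluster_measure:
  "i \<in> {1..l} \<Longrightarrow> mass i * cluster_measure i \<sigma> = (if \<sigma> \<in> S i then \<mu> \<sigma> else 0)"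
  using cluster_config[of i] cluster_mass_pos[of i] by (auto simp: cond_def)

lemma sum_mass_mult_sum:
  assumes "\<And>i. i \<in> {1..l} \<Longrightarrow> is_prob n (\<rho> i)"
  shows "(\<Sum>\<sigma>\<in>config n. \<Sum>i=1..l. mass i * \<rho> i \<sigma>) = total_mass"
proof -
  have "(\<Sum>\<sigma>\<in>config n. \<Sum>i=1..l. mass i * \<rho> i \<sigma>) = (\<Sum>i=1..l. mass i * (\<Sum>\<sigma>\<in>config n. \<rho> i \<sigma>))"
    by (subst sum.swap) (simp add: sum_distrib_left)
  also have "\<dots> = total_mass" using assms by (intro sum.cong) (auto simp: is_prob_def)
  finally show ?thesis .
qed

lemma clustered_part_le: "(\<Sum>i=1..l. mass i * cluster_measure i \<sigma>) \<le> \<mu> \<sigma>"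
proof (cases "\<exists>i\<in>{1..l}. \<sigma> \<in> S i")
  case True
  then obtain i0 where i0: "i0 \<in> {1..l}" "\<sigma> \<in> S i0" by blast
  have "\<sigma> \<notin> S i" if "i \<in> {1..l}" "i \<noteq> i0" for i
    using cluster_disjoint[OF that(1) i0(1) that(2)] i0(2) by blast
  hence "(\<Sum>i=1..l. mass i * cluster_measure i \<sigma>) = (\<Sum>i\<in>{1..l}. if i = i0 then \<mu> \<sigma> else 0)"
    using i0 by (intro sum.cong refl) (auto simp: mass_mult_cluster_measure)
  thus ?thesis using i0(1) by simp
next
  case False
  hence "(\<Sum>i=1..l. mass i * cluster_measure i \<sigma>) = 0"
    by (intro sum.neutral) (auto simp: mass_mult_cluster_measure)
  thus ?thesis using prob by (simp add: is_prob_def)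
qed

lemma unclustered_nonneg: "0 \<le> unclustered \<sigma>"
  using clustered_part_le by (simp add: unclustered_def)

lemma sum_unclustered: "(\<Sum>\<sigma>\<in>config n. unclustered \<sigma>) = 1 - total_mass"
  using prob sum_mass_mult_sum[of "\<lambda>i. cluster_measure i", OF is_prob_cluster_measure]
  by (simp add: unclustered_def sum_subtractf is_prob_def)

lemma total_mass_le_1: "total_mass \<le> 1"
proof -
  have "0 \<le> (\<Sum>\<sigma>\<in>config n. unclustered \<sigma>)" by (intro sum_nonneg unclustered_nonneg)
  thus ?thesis using sum_unclustered by linarith
qed

lemma cluster_deviation_le:
  assumes i: "i \<in> {1..l}" and I: "I \<subseteq> {..<n}"
    and \<epsilon>: "0 < \<epsilon>" "\<epsilon> < 1/2" and n_large: "8 < real n * \<epsilon>\<^sup>2"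
    and symmetric: "eps_symmetric n (cluster_measure i) ((\<epsilon>/9)^3)"
  shows "(\<Sum>\<sigma>\<in>config n. cluster_measure i \<sigma> * \<bar>centered_count n (cluster_measure i) I \<omega> \<sigma>\<bar>)
      + (\<Sum>\<tau>\<in>config n. cluster_product i \<tau> * \<bar>centered_count n (cluster_product i) I \<omega> \<tau>\<bar>) \<le> \<epsilon> * real n"
proof -
  define c where "c = \<epsilon> * real n / 2"
  have "0 < n" using n_large by (cases n) auto
  hence c: "0 < c" using \<epsilon> by (simp add: c_def)
  note \<rho> = is_prob_cluster_measure[OF i]
  have "(\<Sum>\<sigma>\<in>config n. cluster_measure i \<sigma> * \<bar>centered_count n (cluster_measure i) I \<omega> \<sigma>\<bar>)
      \<le> (real n + pair_correlation n (cluster_measure i) \<omega>) / (2 * c) + c / 2"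
    by (rule first_moment_centered_count_le[OF \<rho> I c])
  also have "\<dots> \<le> (real n + 2 * (real n)\<^sup>2 * (\<epsilon>/9)^3) / (2 * c) + c / 2"
    using pair_correlation_le_eps_symmetric[OF symmetric] c by (simp add: divide_right_mono)
  finally have conditional: "(\<Sum>\<sigma>\<in>config n. cluster_measure i \<sigma> * \<bar>centered_count n (cluster_measure i) I \<omega> \<sigma>\<bar>)
      \<le> (real n + 2 * (real n)\<^sup>2 * (\<epsilon>/9)^3) / (2 * c) + c / 2" .
  have "(\<Sum>\<tau>\<in>config n. cluster_product i \<tau> * \<bar>centered_count n (cluster_product i) I \<omega> \<tau>\<bar>)
      \<le> (real n + pair_correlation n (cluster_product i) \<omega>) / (2 * c) + c / 2"
    by (rule first_moment_centered_count_le[OF is_prob_cluster_product[OF i] I c])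
  also have "pair_correlation n (cluster_product i) \<omega> = 0"
    using sum_marg1[OF \<rho>] by (intro pair_correlation_prodm)
  finally show ?thesis
    using conditional cluster_error_arith[OF \<epsilon> n_large] unfolding c_def by linarith
qed

context
  assumes total_mass_pos: "0 < total_mass"
begin

lemma mixture_nonneg: "0 \<le> mixture \<sigma>"
proof -
  have "0 \<le> (\<Sum>i=1..l. mass i * cluster_product i \<sigma>)"
    using is_prob_cluster_product cluster_mass_pos
    by (intro sum_nonneg mult_nonneg_nonneg) (auto simp: is_prob_def less_imp_le)
  thus ?thesis using total_mass_pos by (simp add: mixture_def)
qed

lemma sum_mixture: "(\<Sum>\<tau>\<in>config n. mixture \<tau>) = 1"
  using total_mass_pos sum_mass_mult_sum[of "\<lambda>i. cluster_product i", OF is_prob_cluster_product]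
  by (simp add: mixture_def sum_divide_distrib[symmetric])

lemma gluing_nonneg: "0 \<le> gluing x"
proof -
  have "0 \<le> mass i * cluster_measure i \<sigma> * cluster_product i \<tau>" if "i \<in> {1..l}" for i \<sigma> \<tau>
    using is_prob_cluster_measure[OF that] is_prob_cluster_product[OF that] cluster_mass_pos[OF that]
    by (simp add: is_prob_def)
  thus ?thesis using unclustered_nonneg mixture_nonneg
    by (auto simp: gluing_def intro!: add_nonneg_nonneg sum_nonneg)
qed

lemma gluing_coupling: "gluing \<in> couplings n \<mu> mixture"
  unfolding couplings_def
proof (intro CollectI conjI allI ballI impI gluing_nonneg)
  fix x :: "'a list \<times> 'a list" assume "x \<notin> config n \<times> config n"
  thus "gluing x = 0" by (simp add: gluing_def)
next
  fix \<sigma> :: "'a list" assume \<sigma>: "\<sigma> \<in> config n"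
  have "(\<Sum>\<tau>\<in>config n. gluing (\<sigma>, \<tau>)) = (\<Sum>\<tau>\<in>config n. \<Sum>i=1..l. mass i * cluster_measure i \<sigma> * cluster_product i \<tau>)
      + unclustered \<sigma> * (\<Sum>\<tau>\<in>config n. mixture \<tau>)"
    using \<sigma> by (simp add: gluing_def sum.distrib sum_distrib_left)
  also have "(\<Sum>\<tau>\<in>config n. \<Sum>i=1..l. mass i * cluster_measure i \<sigma> * cluster_product i \<tau>)
      = (\<Sum>i=1..l. mass i * cluster_measure i \<sigma> * (\<Sum>\<tau>\<in>config n. cluster_product i \<tau>))"
    by (subst sum.swap) (simp add: sum_distrib_left)
  also have "\<dots> = (\<Sum>i=1..l. mass i * cluster_measure i \<sigma>)"
    using is_prob_cluster_product by (intro sum.cong) (auto simp: is_prob_def)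
  finally show "(\<Sum>\<tau>\<in>config n. gluing (\<sigma>, \<tau>)) = \<mu> \<sigma>"
    by (simp add: sum_mixture unclustered_def)
next
  fix \<tau> :: "'a list" assume \<tau>: "\<tau> \<in> config n"
  have "(\<Sum>\<sigma>\<in>config n. gluing (\<sigma>, \<tau>)) = (\<Sum>\<sigma>\<in>config n. \<Sum>i=1..l. mass i * cluster_measure i \<sigma> * cluster_product i \<tau>)
      + (\<Sum>\<sigma>\<in>config n. unclustered \<sigma>) * mixture \<tau>"
    using \<tau> by (simp add: gluing_def sum.distrib sum_distrib_right)
  also have "(\<Sum>\<sigma>\<in>config n. \<Sum>i=1..l. mass i * cluster_measure i \<sigma> * cluster_product i \<tau>)
      = (\<Sum>i=1..l. mass i * (\<Sum>\<sigma>\<in>config n. cluster_measure i \<sigma>) * cluster_product i \<tau>)"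
    by (subst sum.swap) (simp add: sum_distrib_left sum_distrib_right mult.assoc)
  also have "\<dots> = total_mass * mixture \<tau>"
    using is_prob_cluster_measure total_mass_pos by (simp add: mixture_def is_prob_def)
  finally show "(\<Sum>\<sigma>\<in>config n. gluing (\<sigma>, \<tau>)) = mixture \<tau>"
    by (simp add: sum_unclustered algebra_simps)
qed

lemma gluing_transport_cost:
  assumes I: "I \<subseteq> {..<n}"
  shows "(\<Sum>\<sigma>\<in>config n. \<Sum>\<tau>\<in>config n.
           gluing (\<sigma>, \<tau>) * \<bar>\<Sum>j\<in>I. (if \<sigma> ! j = \<omega> then 1 else 0) - (if \<tau> ! j = \<omega> then 1 else 0)\<bar>)
    \<le> (\<Sum>i=1..l. mass i *
           ((\<Sum>\<sigma>\<in>config n. cluster_measure i \<sigma> * \<bar>centered_count n (cluster_measure i) I \<omega> \<sigma>\<bar>)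
          + (\<Sum>\<tau>\<in>config n. cluster_product i \<tau> * \<bar>centered_count n (cluster_product i) I \<omega> \<tau>\<bar>)))
      + (1 - total_mass) * real n"
proof -
  let ?C = "config n"
  define F where "F \<sigma> \<tau> = (\<Sum>j\<in>I. (if \<sigma> ! j = \<omega> then 1 else 0) - (if \<tau> ! j = \<omega> then 1 else (0::real)))"
    for \<sigma> \<tau> :: "'a list"
  define cost where "cost p q = (\<Sum>\<sigma>\<in>?C. \<Sum>\<tau>\<in>?C. p \<sigma> * q \<tau> * \<bar>F \<sigma> \<tau>\<bar>)" for p q :: "'a list \<Rightarrow> real"
  have "(\<Sum>\<sigma>\<in>?C. \<Sum>\<tau>\<in>?C. gluing (\<sigma>, \<tau>) * \<bar>F \<sigma> \<tau>\<bar>)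
      = (\<Sum>\<sigma>\<in>?C. \<Sum>\<tau>\<in>?C. (\<Sum>i=1..l. mass i * (cluster_measure i \<sigma> * cluster_product i \<tau> * \<bar>F \<sigma> \<tau>\<bar>))
          + unclustered \<sigma> * mixture \<tau> * \<bar>F \<sigma> \<tau>\<bar>)"
    by (intro sum.cong refl) (simp add: gluing_def sum_distrib_left algebra_simps)
  also have "\<dots> = (\<Sum>i=1..l. mass i * cost (cluster_measure i) (cluster_product i)) + cost unclustered mixture"
    unfolding cost_def sum.distrib sum_distrib_left
    by (subst (2) sum.swap, subst sum.swap) simp
  also have "\<dots> \<le> (\<Sum>i=1..l. mass i *
           ((\<Sum>\<sigma>\<in>?C. cluster_measure i \<sigma> * \<bar>centered_count n (cluster_measure i) I \<omega> \<sigma>\<bar>)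
          + (\<Sum>\<tau>\<in>?C. cluster_product i \<tau> * \<bar>centered_count n (cluster_product i) I \<omega> \<tau>\<bar>)))
      + (1 - total_mass) * 1 * real n"
  proof (intro add_mono sum_mono mult_left_mono)
    fix i assume i: "i \<in> {1..l}"
    note \<rho> = is_prob_cluster_measure[OF i] and \<pi> = is_prob_cluster_product[OF i]
    show "0 \<le> mass i" using i by (rule mass_nonneg)
    show "cost (cluster_measure i) (cluster_product i)
      \<le> (\<Sum>\<sigma>\<in>?C. cluster_measure i \<sigma> * \<bar>centered_count n (cluster_measure i) I \<omega> \<sigma>\<bar>)
        + (\<Sum>\<tau>\<in>?C. cluster_product i \<tau> * \<bar>centered_count n (cluster_product i) I \<omega> \<tau>\<bar>)"
      unfolding cost_def F_def count_diff_eq_centered_count_diff[where \<rho> = "cluster_measure i" and n = n]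
        centered_count_prodm_marg1[OF \<rho> I]
      using \<rho> \<pi> by (intro sum_sum_mult_abs_diff_le) (auto simp: is_prob_def)
  next
    have "\<bar>F \<sigma> \<tau>\<bar> \<le> real n" for \<sigma> \<tau>
    proof -
      have "\<bar>F \<sigma> \<tau>\<bar> \<le> (\<Sum>j\<in>I. 1)" unfolding F_def by (rule order_trans[OF sum_abs sum_mono]) auto
      also have "\<dots> \<le> real n" using card_mono[OF _ I] by simp
      finally show ?thesis .
    qed
    thus "cost unclustered mixture \<le> (1 - total_mass) * 1 * real n"
      using sum_sum_mult_abs_le[of ?C unclustered mixture F "real n"] unclustered_nonneg mixture_nonneg
      by (simp add: cost_def sum_unclustered sum_mixture)
  qed
  finally show ?thesis unfolding F_def by simp
qed

lemma cut_val_gluing_less: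
  assumes \<epsilon>: "0 < \<epsilon>" "\<epsilon> < 1/2" and n_large: "8 < real n * \<epsilon>\<^sup>2"
    and mass_large: "1 - \<epsilon> < total_mass"
    and symmetric: "\<And>i. i \<in> {1..l} \<Longrightarrow> eps_symmetric n (cluster_measure i) ((\<epsilon>/9)^3)"
  shows "cut_val n gluing < 2 * \<epsilon> * real n"
proof (rule cut_val_less)
  fix I :: "nat set" and B :: "('a list \<times> 'a list) set" and \<omega> :: 'a
  assume I: "I \<subseteq> {..<n}" and B: "B \<subseteq> config n \<times> config n"
  have "0 < n" using n_large by (cases n) auto
  have "\<bar>\<Sum>j\<in>I. \<Sum>x\<in>B. gluing x * ((if fst x ! j = \<omega> then 1 else 0) - (if snd x ! j = \<omega> then 1 else 0))\<bar>
      \<le> (\<Sum>\<sigma>\<in>config n. \<Sum>\<tau>\<in>config n.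
           gluing (\<sigma>, \<tau>) * \<bar>\<Sum>j\<in>I. (if \<sigma> ! j = \<omega> then 1 else 0) - (if \<tau> ! j = \<omega> then 1 else 0)\<bar>)"
    by (rule cut_term_le_transport_cost[OF gluing_nonneg B])
  also have "\<dots> \<le> (\<Sum>i=1..l. mass i *
           ((\<Sum>\<sigma>\<in>config n. cluster_measure i \<sigma> * \<bar>centered_count n (cluster_measure i) I \<omega> \<sigma>\<bar>)
          + (\<Sum>\<tau>\<in>config n. cluster_product i \<tau> * \<bar>centered_count n (cluster_product i) I \<omega> \<tau>\<bar>)))
      + (1 - total_mass) * real n"
    by (rule gluing_transport_cost[OF I])
  also have "\<dots> \<le> (\<Sum>i=1..l. mass i * (\<epsilon> * real n)) + (1 - total_mass) * real n"
    using \<epsilon> n_large I symmetric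
    by (intro add_mono order_refl sum_mono mult_left_mono cluster_deviation_le mass_nonneg)
  also have "\<dots> = total_mass * (\<epsilon> * real n) + (1 - total_mass) * real n"
    by (simp add: sum_distrib_right)
  also have "\<dots> < \<epsilon> * real n + \<epsilon> * real n"
  proof (rule add_le_less_mono)
    show "total_mass * (\<epsilon> * real n) \<le> \<epsilon> * real n"
      using total_mass_pos total_mass_le_1 \<epsilon> by (intro mult_left_le_one_le) auto
    show "(1 - total_mass) * real n < \<epsilon> * real n"
      using mass_large \<open>0 < n\<close> by (intro mult_strict_right_mono) auto
  qed
  finally show "\<bar>\<Sum>j\<in>I. \<Sum>x\<in>B. gluing x * ((if fst x ! j = \<omega> then 1 else 0) - (if snd x ! j = \<omega> then 1 else 0))\<bar>
      < 2 * \<epsilon> * real n" by simp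
qed

end

end

lemma cut_dist_cluster_mixture_less:
  fixes \<mu> :: "'a::finite list \<Rightarrow> real" and l :: nat and S :: "nat \<Rightarrow> 'a list set"
  assumes "is_prob n \<mu>"
    and "\<And>i. i \<in> {1..l} \<Longrightarrow> S i \<subseteq> config n"
    and "\<And>i h. i \<in> {1..l} \<Longrightarrow> h \<in> {1..l} \<Longrightarrow> i \<noteq> h \<Longrightarrow> S i \<inter> S h = {}"
    and "\<And>i. i \<in> {1..l} \<Longrightarrow> 0 < msr n \<mu> (S i)"
    and mass_large: "1 - \<epsilon> < (\<Sum>i=1..l. msr n \<mu> (S i))"
    and symmetric: "\<And>i. i \<in> {1..l} \<Longrightarrow> eps_symmetric n (cond n \<mu> (S i)) ((\<epsilon>/9)^3)"
    and \<epsilon>: "0 < \<epsilon>" "\<epsilon> < 1/2" and n_large: "8 < real n * \<epsilon>\<^sup>2"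
  shows "cut_dist n \<mu> (\<lambda>\<sigma>. (1 / (\<Sum>h=1..l. msr n \<mu> (S h))) *
           (\<Sum>i=1..l. msr n \<mu> (S i) * prodm n (marg1 n (cond n \<mu> (S i))) \<sigma>)) < 2 * \<epsilon>"
proof -
  interpret cluster_decomposition n \<mu> l S
    using assms(1-4) by unfold_locales
  have pos: "0 < total_mass" using mass_large \<epsilon> by linarith
  have "0 < n" using n_large by (cases n) auto
  have "cut_dist n \<mu> mixture \<le> cut_val n gluing / real n"
    by (rule cut_dist_le_cut_val[OF gluing_coupling[OF pos]])
  also have "\<dots> < 2 * \<epsilon>"
    using cut_val_gluing_less[OF pos \<epsilon> n_large mass_large symmetric] \<open>0 < n\<close> by (simp add: field_simps)
  finally show ?thesis by (simp add: mixture_def[abs_def])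
qed

theorem proposition2p6:
  assumes "CARD('a::finite) \<ge> 2"
  shows "\<forall>\<epsilon>::real. 0 < \<epsilon> \<and> \<epsilon> < 1/2 \<longrightarrow>
    (\<exists>n0::nat. \<forall>n > n0. \<forall>(\<mu> :: 'a list \<Rightarrow> real) (l::nat) (S :: nat \<Rightarrow> 'a list set).
       is_prob n \<mu>
       \<and> (\<forall>i\<in>{1..l}. S i \<subseteq> config n)
       \<and> (\<forall>i\<in>{1..l}. \<forall>h\<in>{1..l}. i \<noteq> h \<longrightarrow> S i \<inter> S h = {})
       \<and> (\<Sum>i=1..l. msr n \<mu> (S i)) > 1 - \<epsilon>
       \<and> (\<forall>i\<in>{1..l}. msr n \<mu> (S i) > 0 \<and> eps_symmetric n (cond n \<mu> (S i)) ((\<epsilon>/9)^3))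
       \<longrightarrow> (let z = (\<Sum>h=1..l. msr n \<mu> (S h)) in
            cut_dist n \<mu> (\<lambda>\<sigma>. (1/z) * (\<Sum>i=1..l. msr n \<mu> (S i) *
               prodm n (\<lambda>j. marg1 n (cond n \<mu> (S i)) j) \<sigma>)) < 2 * \<epsilon>))"
proof -
  have eventually_large: "\<exists>n0::nat. \<forall>n > n0. 8 < real n * \<epsilon>\<^sup>2" if "0 < \<epsilon>" for \<epsilon> :: real
  proof -
    obtain n0 :: nat where n0: "8 / \<epsilon>\<^sup>2 < real n0" using reals_Archimedean2 by blast
    have "8 < real n * \<epsilon>\<^sup>2" if "n0 < n" for n
    proof -
      have "8 / \<epsilon>\<^sup>2 < real n" using n0 that by linarith
      thus ?thesis using \<open>0 < \<epsilon>\<close> by (simp add: pos_divide_less_eq)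
    qed
    thus ?thesis by blast
  qed
  show ?thesis
    by (intro allI impI; elim conjE; frule eventually_large; elim exE; rule exI; intro allI impI;
        elim conjE; unfold Let_def; rule cut_dist_cluster_mixture_less) auto
qed

end
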